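(* Fix $b\in\mathbb{Z}^{V_+}_{\ge0}$. For every $\bar x\in\mathcal{X}$ let $\mathrm{FLOW}(\bar x)$ be the set of $y\in[\mathbf 0,b]^N$ for which there exist $f\in\mathbb{R}^{[N]\times A}_{\ge0}$ and $g\in\mathbb{R}^{[N]\times V_+}_{\ge0}$ with $f^\xi(\delta^-(v))+d^\xi(v)=f^\xi(\delta^+(v))+g^\xi_v$ for all $v\in V_+$, $\xi\in[N]$; $f^\xi_{(u,v)}\le\frac{C}{2}\bar x_{\{u,v\}}$ for all $(u,v)\in A$, $\xi\in[N]$; and $g^\xi_v\le C\,y^\xi_v$ for all $v\in V_+$, $\xi\in[N]$. Then $\mathrm{FLOW}(\bar x)\cap\mathbb{Z}^{[N]\times V_+}=\Pi(\bar x)\cap[\mathbf 0,b]^N$ for every $\bar x\in\mathcal{X}\cap\mathbb{Z}^E$.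
   Context: $G=(V,E)$ complete undirected graph with $V=\{0\}\cup V_+$ ($0$ depot, $V_+$ customers); $D=(V,A)$ replaces each edge by two opposite arcs; $\delta^-(v)$ and $\delta^+(v)$ are the arcs entering and leaving $v$ in $D$. Capacity $C>0$; scenarios $\xi\in[N]$ with demands $d^\xi\in\mathbb{Q}^{V_+}_{\ge0}$, $d^\xi(v)\le C$ for all $\xi,v$, and probabilities $p_\xi\ge0$ summing to $1$; $\bar d=\sum_\xi p_\xi d^\xi$. $f(S)=\sum_{i\in S}f(i)$; $\delta(S)$: edges with exactly one end in $S$; $E(S)$: edges with both ends in $S$. $\mathcal{X}$ is one of $\mathcal{X}_{\mathrm{sub}}=\{x\in[0,2]^E: x(\delta(v))=2\ \forall v\in V_+,\ x(E(S))\le|S|-1\ \forall\emptyset\ne S\subseteq V_+\}$ or $\mathcal{X}_{\mathrm{cvrp}}=\mathcal{X}_{\mathrm{sub}}\cap\{x:x(\delta(0))=2k,\ x(E(S))\le|S|-\lceil\bar d(S)/C\rceil\}$ for a given positive integer $k$. A route $R=(v_1,\dots,v_\ell)$ is the cycle $0,v_1,\dots,v_\ell,0$ through distinct customers, $v_0=v_{\ell+1}=0$. Each $x\in\mathcal{X}\cap\mathbb{Z}^E$ encodes a collection of routes $\mathcal{R}(x)$ whose customer sets partition $V_+$. For a route $R$ and $\xi$, $\mathcal{Y}^\xi(R)$ is the set of $y^\xi\in\mathbb{Z}^{V_+}_{\ge0}$ for which there exist $f\in\mathbb{R}^A_{\ge0}$, $g\in\mathbb{R}^{V_+}_{\ge0}$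 with $f_{(v_{i-1},v_i)}+d^\xi(v_i)=f_{(v_i,v_{i+1})}+g_{v_i}$ ($i\in[\ell]$), $f_{(v_{i-1},v_i)}\le C$ ($i\in[\ell+1]$), $g_{v_i}\le Cy^\xi_{v_i}$ ($i\in[\ell]$). $\Pi(R)=\mathcal{Y}^1(R)\times\cdots\times\mathcal{Y}^N(R)$, $\Pi(x)=\bigcap_{R\in\mathcal{R}(x)}\Pi(R)$. $[\mathbf 0,b]^N=\{y\in\mathbb{R}^{[N]\times V_+}:0\le y^\xi_v\le b_v\}$. *)

theory Defs
  imports Complex_Main
begin

(* Graph: vertex set V = insert dep Vp (dep = depot 0, Vp = customers V_+).
   Undirected edges are two-element vertex sets {u,v}; arcs are ordered pairs. *)

definition verts :: "'v \<Rightarrow> 'v set \<Rightarrow> 'v set" where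
  "verts dep Vp = insert dep Vp"

definition edges :: "'v \<Rightarrow> 'v set \<Rightarrow> 'v set set" where
  "edges dep Vp = {{u, v} | u v. u \<in> verts dep Vp \<and> v \<in> verts dep Vp \<and> u \<noteq> v}"

definition arcs :: "'v \<Rightarrow> 'v set \<Rightarrow> ('v \<times> 'v) set" where
  "arcs dep Vp = {(u, v). u \<in> verts dep Vp \<and> v \<in> verts dep Vp \<and> u \<noteq> v}"

definition cut :: "'v \<Rightarrow> 'v set \<Rightarrow> 'v set \<Rightarrow> 'v set set" where
  "cut dep Vp S = {e \<in> edges dep Vp. card (e \<inter> S) = 1}"

definition inner_edges :: "'v \<Rightarrow> 'v set \<Rightarrow> 'v set \<Rightarrow> 'v set set" where
  "inner_edges dep Vp S = {e \<in> edges dep Vp. e \<subseteq> S}"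

definition dbar :: "nat \<Rightarrow> (nat \<Rightarrow> real) \<Rightarrow> (nat \<Rightarrow> 'v \<Rightarrow> real) \<Rightarrow> 'v \<Rightarrow> real" where
  "dbar N p d v = (\<Sum>\<xi>\<in>{1..N}. p \<xi> * d \<xi> v)"

definition Xsub :: "'v \<Rightarrow> 'v set \<Rightarrow> ('v set \<Rightarrow> real) set" where
  "Xsub dep Vp = {x.
     (\<forall>e\<in>edges dep Vp. 0 \<le> x e \<and> x e \<le> 2) \<and>
     (\<forall>v\<in>Vp. sum x (cut dep Vp {v}) = 2) \<and>
     (\<forall>S. S \<noteq> {} \<and> S \<subseteq> Vp \<longrightarrow> sum x (inner_edges dep Vp S) \<le> real (card S) - 1)}"

definition Xcvrp :: "'v \<Rightarrow> 'v set \<Rightarrow> real \<Rightarrow> nat \<Rightarrow> (nat \<Rightarrow> real) \<Rightarrow> (nat \<Rightarrow> 'v \<Rightarrow> real)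
                      \<Rightarrow> nat \<Rightarrow> ('v set \<Rightarrow> real) set" where
  "Xcvrp dep Vp C N p d k = Xsub dep Vp \<inter> {x.
     sum x (cut dep Vp {dep}) = 2 * real k \<and>
     (\<forall>S. S \<noteq> {} \<and> S \<subseteq> Vp \<longrightarrow>
        sum x (inner_edges dep Vp S) \<le> real (card S) - of_int \<lceil>sum (dbar N p d) S / C\<rceil>)}"

(* A route R = [v_1,...,v_l] is the cycle dep, v_1, ..., v_l, dep.
   Its list of traversed (undirected) edges: *)
definition route_edges :: "'v \<Rightarrow> 'v list \<Rightarrow> 'v set list" where
  "route_edges dep R = map (\<lambda>(u, v). {u, v}) (zip (dep # R) (R @ [dep]))"

(* R belongs to the route collection R(x) encoded by integral x: for every edge
   touching a customer of R, x_e equals the number of times the cycle uses e.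
   (Both orientations of a cycle are admitted.) *)
definition in_routes :: "'v \<Rightarrow> 'v set \<Rightarrow> ('v set \<Rightarrow> real) \<Rightarrow> 'v list \<Rightarrow> bool" where
  "in_routes dep Vp x R \<longleftrightarrow> R \<noteq> [] \<and> distinct R \<and> set R \<subseteq> Vp \<and>
     (\<forall>e\<in>edges dep Vp. e \<inter> set R \<noteq> {} \<longrightarrow> x e = real (count_list (route_edges dep R) e))"

definition Yset :: "'v \<Rightarrow> 'v set \<Rightarrow> real \<Rightarrow> (nat \<Rightarrow> 'v \<Rightarrow> real) \<Rightarrow> nat \<Rightarrow> 'v list
                     \<Rightarrow> ('v \<Rightarrow> real) set" where
  "Yset dep Vp C d \<xi> R = {y.
     (\<forall>v\<in>Vp. y v \<in> \<int> \<and> 0 \<le> y v) \<and>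
     (let vs = dep # R @ [dep]; l = length R in
      \<exists>(f :: 'v \<times> 'v \<Rightarrow> real) (g :: 'v \<Rightarrow> real).
        (\<forall>a\<in>arcs dep Vp. 0 \<le> f a) \<and> (\<forall>v\<in>Vp. 0 \<le> g v) \<and>
        (\<forall>i\<in>{1..l}. f (vs ! (i - 1), vs ! i) + d \<xi> (vs ! i) = f (vs ! i, vs ! (i + 1)) + g (vs ! i)) \<and>
        (\<forall>i\<in>{1..l + 1}. f (vs ! (i - 1), vs ! i) \<le> C) \<and>
        (\<forall>i\<in>{1..l}. g (vs ! i) \<le> C * y (vs ! i)))}"

definition PiX :: "'v \<Rightarrow> 'v set \<Rightarrow> real \<Rightarrow> nat \<Rightarrow> (nat \<Rightarrow> 'v \<Rightarrow> real) \<Rightarrow> ('v set \<Rightarrow> real)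
                    \<Rightarrow> (nat \<Rightarrow> 'v \<Rightarrow> real) set" where
  "PiX dep Vp C N d x = {y. \<forall>R. in_routes dep Vp x R \<longrightarrow> (\<forall>\<xi>\<in>{1..N}. y \<xi> \<in> Yset dep Vp C d \<xi> R)}"

definition box :: "'v set \<Rightarrow> nat \<Rightarrow> ('v \<Rightarrow> int) \<Rightarrow> (nat \<Rightarrow> 'v \<Rightarrow> real) set" where
  "box Vp N b = {y. \<forall>\<xi>\<in>{1..N}. \<forall>v\<in>Vp. 0 \<le> y \<xi> v \<and> y \<xi> v \<le> of_int (b v)}"

definition intpts :: "'v set \<Rightarrow> nat \<Rightarrow> (nat \<Rightarrow> 'v \<Rightarrow> real) set" where
  "intpts Vp N = {y. \<forall>\<xi>\<in>{1..N}. \<forall>v\<in>Vp. y \<xi> v \<in> \<int>}"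

definition FLOW :: "'v \<Rightarrow> 'v set \<Rightarrow> real \<Rightarrow> nat \<Rightarrow> (nat \<Rightarrow> 'v \<Rightarrow> real) \<Rightarrow> ('v \<Rightarrow> int)
                    \<Rightarrow> ('v set \<Rightarrow> real) \<Rightarrow> (nat \<Rightarrow> 'v \<Rightarrow> real) set" where
  "FLOW dep Vp C N d b x = {y. y \<in> box Vp N b \<and>
     (\<exists>(f :: nat \<Rightarrow> 'v \<times> 'v \<Rightarrow> real) (g :: nat \<Rightarrow> 'v \<Rightarrow> real).
        (\<forall>\<xi>\<in>{1..N}. \<forall>a\<in>arcs dep Vp. 0 \<le> f \<xi> a) \<and>
        (\<forall>\<xi>\<in>{1..N}. \<forall>v\<in>Vp. 0 \<le> g \<xi> v) \<and>
        (\<forall>\<xi>\<in>{1..N}. \<forall>v\<in>Vp.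
           (\<Sum>a\<in>{a\<in>arcs dep Vp. snd a = v}. f \<xi> a) + d \<xi> v =
           (\<Sum>a\<in>{a\<in>arcs dep Vp. fst a = v}. f \<xi> a) + g \<xi> v) \<and>
        (\<forall>\<xi>\<in>{1..N}. \<forall>(u, v)\<in>arcs dep Vp. f \<xi> (u, v) \<le> C / 2 * x {u, v}) \<and>
        (\<forall>\<xi>\<in>{1..N}. \<forall>v\<in>Vp. g \<xi> v \<le> C * y \<xi> v))}"

end

theory Submission
  imports Defs
begin

(* An integral point x of the subtour polytope decomposes into depot cycles. Every customer has
   x-degree 2 and, by subtour elimination, an edge between two customers carries at most 1 and
   the customer edges of positive value contain no cycle. Hence a longest path of customer edges through a customer
   has no customer neighbours outside it at either end, so both ends join the depot, and the
   resulting route is encoded by x; two routes sharing a customer have the same customers.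
   The flow system of FLOW therefore splits along the routes. An arc flow f yields on each route
   the flow C/2 + f(u,v) - f(v,u) on edges used once, which obeys the route constraints.
   Conversely a route flow f is spread over an edge used once as f/2 forwards and (C - f)/2
   backwards: both lie in [0, C/2] and their difference f - C/2 preserves conservation at every
   customer. Integrality of y is part of Pi(x) since every customer lies on a route. *)

section \<open>Integral points of the subtour polytope\<close>

lemma edges_iff: "{u, v} \<in> edges dep Vp \<longleftrightarrow> u \<in> insert dep Vp \<and> v \<in> insert dep Vp \<and> u \<noteq> v"
  unfolding edges_def verts_def by (auto simp: doubleton_eq_iff)

lemma arcs_iff: "(u, v) \<in> arcs dep Vp \<longleftrightarrow> u \<in> insert dep Vp \<and> v \<in> insert dep Vp \<and> u \<noteq> v"
  unfolding arcs_def verts_def by auto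

lemma finite_edges: "finite Vp \<Longrightarrow> finite (edges dep Vp)"
proof -
  assume "finite Vp"
  moreover have "edges dep Vp \<subseteq> (\<lambda>(u, v). {u, v}) ` (insert dep Vp \<times> insert dep Vp)"
    unfolding edges_def verts_def by auto
  ultimately show ?thesis by (meson finite_SigmaI finite_imageI finite_insert finite_subset)
qed

lemma cut_singleton:
  assumes "c \<in> Vp"
  shows "cut dep Vp {c} = (\<lambda>u. {c, u}) ` (insert dep Vp - {c})"
proof -
  have "card (e \<inter> {c}) = 1 \<longleftrightarrow> c \<in> e" for e :: "'a set"
    by (cases "c \<in> e") auto
  then have "cut dep Vp {c} = {e \<in> edges dep Vp. c \<in> e}"
    unfolding cut_def by simp
  also have "\<dots> = (\<lambda>u. {c, u}) ` (insert dep Vp - {c})"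
    using assms unfolding edges_def verts_def by blast
  finally show ?thesis .
qed

lemma cycle_edges_inj_on:
  assumes "distinct M" "3 \<le> length M"
  shows "inj_on (\<lambda>i. {M ! i, M ! (Suc i mod length M)}) {..<length M}"
proof (rule inj_onI)
  fix i j
  assume i: "i \<in> {..<length M}" and j: "j \<in> {..<length M}"
    and eq: "{M ! i, M ! (Suc i mod length M)} = {M ! j, M ! (Suc j mod length M)}"
  have idx: "M ! p = M ! q \<longleftrightarrow> p = q" if "p < length M" "q < length M" for p q
    using assms(1) that nth_eq_iff_index_eq by blast
  have "0 < length M" using assms(2) by linarith
  then have "Suc i mod length M < length M" "Suc j mod length M < length M" by simp_all
  then have "i = j \<or> (i = Suc j mod length M \<and> Suc i mod length M = j)"
    using eq i j idx by (auto simp: doubleton_eq_iff)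
  then show "i = j"
    using i j assms(2) by (auto simp: mod_Suc split: if_splits)
qed

locale integral_subtour_point =
  fixes dep :: 'v and Vp :: "'v set" and x :: "'v set \<Rightarrow> real"
  assumes finite_customers: "finite Vp" and depot_not_customer: "dep \<notin> Vp"
    and subtour_point: "x \<in> Xsub dep Vp"
    and integral: "\<forall>e\<in>edges dep Vp. x e \<in> \<int>"
begin

abbreviation "V \<equiv> insert dep Vp"

lemma x_commute: "x {u, v} = x {v, u}"
  by (simp add: insert_commute)

lemma x_bounds: "e \<in> edges dep Vp \<Longrightarrow> 0 \<le> x e \<and> x e \<le> 2"
  using subtour_point by (simp add: Xsub_def)

lemma x_nonneg: "u \<in> V \<Longrightarrow> v \<in> V \<Longrightarrow> u \<noteq> v \<Longrightarrow> 0 \<le> x {u, v}"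
  using x_bounds[of "{u, v}"] by (simp add: edges_iff)

lemma x_cases:
  assumes "u \<in> V" "v \<in> V" "u \<noteq> v"
  shows "x {u, v} = 0 \<or> x {u, v} = 1 \<or> x {u, v} = 2"
proof -
  have e: "{u, v} \<in> edges dep Vp" using assms by (simp add: edges_iff)
  then obtain n where n: "x {u, v} = of_int n" using integral by (auto elim: Ints_cases)
  have "0 \<le> n" "n \<le> 2" using x_bounds[OF e] n by simp_all
  then have "n = 0 \<or> n = 1 \<or> n = 2" by auto
  then show ?thesis using n by auto
qed

lemma x_pos_imp_ge_1: "u \<in> V \<Longrightarrow> v \<in> V \<Longrightarrow> u \<noteq> v \<Longrightarrow> 0 < x {u, v} \<Longrightarrow> 1 \<le> x {u, v}"
  using x_cases by fastforce

lemma subtour_elimination: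
  "S \<noteq> {} \<Longrightarrow> S \<subseteq> Vp \<Longrightarrow> sum x (inner_edges dep Vp S) \<le> real (card S) - 1"
  using subtour_point unfolding Xsub_def by blast

lemma degree_eq_2:
  assumes "c \<in> Vp"
  shows "(\<Sum>u\<in>V - {c}. x {c, u}) = 2"
proof -
  have "inj_on (\<lambda>u. {c, u}) (V - {c})"
    by (rule inj_onI) (auto simp: doubleton_eq_iff)
  then have "sum x (cut dep Vp {c}) = (\<Sum>u\<in>V - {c}. x {c, u})"
    using cut_singleton[OF assms] by (simp add: sum.reindex)
  moreover have "sum x (cut dep Vp {c}) = 2" using subtour_point assms unfolding Xsub_def by simp
  ultimately show ?thesis by simp
qed

lemma x_customers_le_1:
  assumes "u \<in> Vp" "v \<in> Vp" "u \<noteq> v"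
  shows "x {u, v} \<le> 1"
proof -
  have "inner_edges dep Vp {u, v} = {{u, v}}"
  proof (intro equalityI subsetI)
    fix e assume "e \<in> inner_edges dep Vp {u, v}"
    then obtain p q where "e = {p, q}" "p \<noteq> q" "e \<subseteq> {u, v}"
      unfolding inner_edges_def edges_def by blast
    then show "e \<in> {{u, v}}" by blast
  next
    fix e assume "e \<in> {{u, v}}"
    then show "e \<in> inner_edges dep Vp {u, v}"
      using assms edges_iff[of u v] unfolding inner_edges_def by auto
  qed
  then show ?thesis using subtour_elimination[of "{u, v}"] assms by simp
qed

lemma no_customer_cycle:
  assumes M: "distinct M" "set M \<subseteq> Vp" "3 \<le> length M"
    and edges: "\<And>i. i < length M \<Longrightarrow> 1 \<le> x {M ! i, M ! (Suc i mod length M)}"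
  shows False
proof -
  let ?m = "length M" and ?e = "\<lambda>i. {M ! i, M ! (Suc i mod length M)}"
  have in_inner: "?e i \<in> inner_edges dep Vp (set M)" if i: "i < ?m" for i
  proof -
    have "0 < ?m" using M(3) by linarith
    then have j: "Suc i mod ?m < ?m" by simp
    have "Suc i mod ?m \<noteq> i"
      using i M(3) by (cases "Suc i = ?m") auto
    then have "M ! i \<noteq> M ! (Suc i mod ?m)" using i j M(1) by (simp add: nth_eq_iff_index_eq)
    moreover have "M ! i \<in> set M" "M ! (Suc i mod ?m) \<in> set M" using i j by simp_all
    ultimately show ?thesis
      using M(2) by (auto simp: inner_edges_def edges_iff)
  qed
  have "real ?m \<le> (\<Sum>i<?m. x (?e i))"
    using edges sum_mono[of "{..<?m}" "\<lambda>_. 1::real" "\<lambda>i. x (?e i)"] by simp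
  also have "\<dots> = sum x (?e ` {..<?m})"
    using cycle_edges_inj_on[OF M(1,3)] by (simp add: sum.reindex)
  also have "\<dots> \<le> sum x (inner_edges dep Vp (set M))"
  proof (rule sum_mono2)
    show "finite (inner_edges dep Vp (set M))"
      using finite_edges[OF finite_customers] unfolding inner_edges_def by simp
    show "?e ` {..<?m} \<subseteq> inner_edges dep Vp (set M)" using in_inner by blast
    show "0 \<le> x e" if "e \<in> inner_edges dep Vp (set M) - ?e ` {..<?m}" for e
      using that x_bounds unfolding inner_edges_def by blast
  qed
  also have "\<dots> \<le> real ?m - 1"
  proof -
    have "set M \<noteq> {}" using M(3) by (cases M) auto
    then show ?thesis using subtour_elimination[of "set M"] M(2) distinct_card[OF M(1)] by simp
  qed
  finally show False by simp
qed

lemma degree_two_support: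
  assumes c: "c \<in> Vp" and a: "a \<in> V - {c}" and b: "b \<in> V - {c}"
    and xa: "1 \<le> x {c, a}" and xb: "1 \<le> x {c, b}" and ab: "a = b \<Longrightarrow> x {c, a} = 2"
    and u: "u \<in> V - {c}"
  shows "x {c, u} = (if u = a then 1 else 0) + (if u = b then 1 else 0)"
proof -
  let ?rest = "V - {c} - {a, b}"
  have nonneg: "\<And>w. w \<in> V - {c} \<Longrightarrow> 0 \<le> x {c, w}" using c x_nonneg by auto
  have fin: "finite (V - {c})" using finite_customers by simp
  have "(\<Sum>w\<in>V - {c}. x {c, w}) = (\<Sum>w\<in>{a, b}. x {c, w}) + (\<Sum>w\<in>?rest. x {c, w})"
    using a b fin by (subst sum.subset_diff[of "{a, b}"]) auto
  moreover have "2 \<le> (\<Sum>w\<in>{a, b}. x {c, w})" using xa xb ab by (cases "a = b") auto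
  moreover have "0 \<le> (\<Sum>w\<in>?rest. x {c, w})" using nonneg by (intro sum_nonneg) auto
  ultimately have sums: "(\<Sum>w\<in>{a, b}. x {c, w}) = 2" "(\<Sum>w\<in>?rest. x {c, w}) = 0"
    using degree_eq_2[OF c] by linarith+
  have zero: "x {c, w} = 0" if "w \<in> ?rest" for w
    using sum_nonneg_eq_0_iff[of ?rest "\<lambda>w. x {c, w}"] sums(2) that fin nonneg by auto
  have "x {c, a} = (if a = b then 2 else 1)" "x {c, b} = (if a = b then 2 else 1)"
    using sums(1) xa xb ab by (cases "a = b"; simp)+
  then show ?thesis using zero u by auto
qed

end

section \<open>Walks of routes\<close>

definition walk :: "'v \<Rightarrow> 'v list \<Rightarrow> 'v list" where
  "walk dep R = dep # R @ [dep]"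

definition walk_arc :: "'v \<Rightarrow> 'v list \<Rightarrow> 'v \<times> 'v \<Rightarrow> bool" where
  "walk_arc dep R a \<longleftrightarrow>
     (\<exists>i\<in>{1..Suc (length R)}. walk dep R ! (i - 1) = fst a \<and> walk dep R ! i = snd a)"

locale route_walk =
  fixes dep :: 'v and R :: "'v list"
  assumes distinct_route: "distinct R" and depot_not_on_route: "dep \<notin> set R"
    and route_nonempty: "R \<noteq> []"
begin

abbreviation "w \<equiv> walk dep R"
abbreviation "l \<equiv> length R"

lemma walk_first: "w ! 0 = dep"
  and walk_last: "w ! Suc l = dep"
  by (simp_all add: walk_def nth_append)

lemma walk_customer:
  assumes "1 \<le> k" "k \<le> l"
  shows "w ! k = R ! (k - 1)" "w ! k \<in> set R" "w ! k \<noteq> dep"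
proof -
  show "w ! k = R ! (k - 1)" using assms by (cases k) (simp_all add: walk_def nth_append)
  then show "w ! k \<in> set R" using assms by simp
  then show "w ! k \<noteq> dep" using depot_not_on_route by auto
qed

lemma walk_in_route_or_depot: "i \<le> Suc l \<Longrightarrow> w ! i \<in> insert dep (set R)"
  using walk_customer(2)[of i] walk_first walk_last
  by (cases "i = 0 \<or> i = Suc l") auto

lemma customer_position:
  assumes "c \<in> set R"
  obtains k where "1 \<le> k" "k \<le> l" "w ! k = c"
proof -
  obtain j where "j < l" "R ! j = c" using assms by (auto simp: in_set_conv_nth)
  then show ?thesis using that[of "Suc j"] walk_customer(1)[of "Suc j"] by simp
qed

lemma walk_index_unique:
  assumes k: "1 \<le> k" "k \<le> l" and i: "i \<le> Suc l" and eq: "w ! i = w ! k"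
  shows "i = k"
proof -
  have "w ! i \<noteq> dep" using eq walk_customer(3)[OF k] by simp
  then have "i \<noteq> 0" "i \<noteq> Suc l" using walk_first walk_last by (metis, metis)
  then have i': "1 \<le> i" "i \<le> l" using i by simp_all
  then have "R ! (i - 1) = R ! (k - 1)" using eq walk_customer(1) k by simp
  then have "i - 1 = k - 1" using distinct_route i' k by (simp add: nth_eq_iff_index_eq)
  then show ?thesis using i' k by simp
qed

lemma walk_adjacent_neq:
  assumes "i \<le> l"
  shows "w ! i \<noteq> w ! Suc i"
proof (cases "i = 0")
  case True
  have "1 \<le> l" using route_nonempty by (cases R) auto
  then show ?thesis using True walk_first walk_customer(3)[of 1] by simp
next
  case False
  show ?thesis
  proof
    assume "w ! i = w ! Suc i"
    moreover have "1 \<le> i" "Suc i \<le> Suc l" using False assms by simp_all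
    ultimately have "Suc i = i" using walk_index_unique assms by metis
    then show False by simp
  qed
qed

lemma walk_neighbours_eq_imp_singleton:
  assumes k: "1 \<le> k" "k \<le> l" and eq: "w ! (k - 1) = w ! Suc k"
  shows "l = 1"
proof (cases "k = 1")
  case True
  then have "w ! Suc k = dep" using eq walk_first by simp
  then show ?thesis using k walk_customer(3)[of "Suc k"] True by (cases "Suc k \<le> l") auto
next
  case False
  then have "Suc k = k - 1" using walk_index_unique[of "k - 1" "Suc k"] k eq by simp
  then show ?thesis by simp
qed

lemma length_route_edges: "length (route_edges dep R) = Suc l"
  by (simp add: route_edges_def)

lemma route_edges_nth: "i \<le> l \<Longrightarrow> route_edges dep R ! i = {w ! i, w ! Suc i}"
  by (cases i) (simp_all add: route_edges_def walk_def nth_append less_Suc_eq_le)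

lemma route_edge_index_iff:
  assumes k: "1 \<le> k" "k \<le> l" and u: "u \<noteq> w ! k" and i: "i \<le> l"
  shows "{w ! k, u} = {w ! i, w ! Suc i} \<longleftrightarrow>
    (i = k \<and> u = w ! Suc k) \<or> (i = k - 1 \<and> u = w ! (k - 1))"
proof
  assume "{w ! k, u} = {w ! i, w ! Suc i}"
  then have "(w ! k = w ! i \<and> u = w ! Suc i) \<or> (w ! k = w ! Suc i \<and> u = w ! i)"
    by (auto simp: doubleton_eq_iff)
  then show "(i = k \<and> u = w ! Suc k) \<or> (i = k - 1 \<and> u = w ! (k - 1))"
  proof (elim disjE conjE)
    assume "w ! k = w ! i" "u = w ! Suc i"
    moreover have "i = k" using walk_index_unique[OF k _ \<open>w ! k = w ! i\<close>[symmetric]] i by simp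
    ultimately show ?thesis by simp
  next
    assume "w ! k = w ! Suc i" "u = w ! i"
    then have "Suc i = k" using walk_index_unique[OF k, of "Suc i"] i by simp
    then show ?thesis using \<open>u = w ! i\<close> by auto
  qed
next
  assume "(i = k \<and> u = w ! Suc k) \<or> (i = k - 1 \<and> u = w ! (k - 1))"
  moreover have "Suc (k - 1) = k" using k by simp
  ultimately show "{w ! k, u} = {w ! i, w ! Suc i}" by (auto simp: insert_commute)
qed

lemma count_route_edges:
  assumes k: "1 \<le> k" "k \<le> l" and u: "u \<noteq> w ! k"
  shows "count_list (route_edges dep R) {w ! k, u} =
    (if u = w ! (k - 1) then 1 else 0) + (if u = w ! Suc k then 1 else 0)"
proof -
  have "count_list (route_edges dep R) {w ! k, u} =
      card {i. i < Suc l \<and> {w ! k, u} = route_edges dep R ! i}"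
    by (simp add: count_list_eq_length_filter length_filter_conv_card length_route_edges)
  also have "{i. i < Suc l \<and> {w ! k, u} = route_edges dep R ! i} =
      (if u = w ! Suc k then {k} else {}) \<union> (if u = w ! (k - 1) then {k - 1} else {})"
  proof -
    have "i < Suc l \<and> {w ! k, u} = route_edges dep R ! i \<longleftrightarrow>
        (i = k \<and> u = w ! Suc k) \<or> (i = k - 1 \<and> u = w ! (k - 1))" for i
    proof (cases "i \<le> l")
      case True
      then show ?thesis using route_edges_nth[OF True] route_edge_index_iff[OF k u True] by simp
    qed (use k in auto)
    then show ?thesis by auto
  qed
  also have "card \<dots> = (if u = w ! (k - 1) then 1 else 0) + (if u = w ! Suc k then 1 else 0)"
    using k by auto
  finally show ?thesis .
qed

lemma walk_arcs_at_customer: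
  assumes k: "1 \<le> k" "k \<le> l"
  shows "walk_arc dep R (w ! (k - 1), w ! k)" "walk_arc dep R (w ! k, w ! Suc k)"
    and "w ! (k - 1) \<noteq> w ! Suc k \<Longrightarrow> \<not> walk_arc dep R (w ! Suc k, w ! k)"
    and "w ! (k - 1) \<noteq> w ! Suc k \<Longrightarrow> \<not> walk_arc dep R (w ! k, w ! (k - 1))"
proof -
  show "walk_arc dep R (w ! (k - 1), w ! k)" "walk_arc dep R (w ! k, w ! Suc k)"
    unfolding walk_arc_def using k by force+
  assume neq: "w ! (k - 1) \<noteq> w ! Suc k"
  show "\<not> walk_arc dep R (w ! Suc k, w ! k)"
  proof
    assume "walk_arc dep R (w ! Suc k, w ! k)"
    then obtain i where "i \<le> Suc l" "w ! (i - 1) = w ! Suc k" "w ! i = w ! k"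
      unfolding walk_arc_def by auto
    then show False using walk_index_unique[OF k, of i] neq by auto
  qed
  show "\<not> walk_arc dep R (w ! k, w ! (k - 1))"
  proof
    assume "walk_arc dep R (w ! k, w ! (k - 1))"
    then obtain i where "1 \<le> i" "i \<le> Suc l" "w ! (i - 1) = w ! k" "w ! i = w ! (k - 1)"
      unfolding walk_arc_def by auto
    moreover from this have "i - 1 = k" using walk_index_unique[OF k, of "i - 1"] by simp
    ultimately have "i = Suc k" "w ! i = w ! (k - 1)" by simp_all
    then show False using neq by simp
  qed
qed

end

section \<open>The routes encoded by an integral subtour point\<close>

context integral_subtour_point
begin

lemma route_walk_if_in_routes: "in_routes dep Vp x R \<Longrightarrow> route_walk dep R"
  using depot_not_customer unfolding in_routes_def by unfold_locales auto

lemma x_at_route_customer: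
  assumes R: "in_routes dep Vp x R" and k: "1 \<le> k" "k \<le> length R"
    and u: "u \<in> V" "u \<noteq> walk dep R ! k"
  shows "x {walk dep R ! k, u} =
    (if u = walk dep R ! (k - 1) then 1 else 0) + (if u = walk dep R ! Suc k then 1 else 0)"
proof -
  interpret route_walk dep R using route_walk_if_in_routes[OF R] .
  have c: "w ! k \<in> set R" "w ! k \<in> Vp" using walk_customer(2)[OF k] R unfolding in_routes_def by auto
  then have "{w ! k, u} \<in> edges dep Vp" using u by (simp add: edges_iff)
  moreover have "{w ! k, u} \<inter> set R \<noteq> {}" using c(1) by blast
  ultimately have "x {w ! k, u} = real (count_list (route_edges dep R) {w ! k, u})"
    using R unfolding in_routes_def by meson
  then show ?thesis using count_route_edges[OF k u(2)] by simp
qed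

lemma x_route_neighbours:
  assumes R: "in_routes dep Vp x R" and k: "1 \<le> k" "k \<le> length R"
  shows "x {walk dep R ! (k - 1), walk dep R ! k} =
      (if walk dep R ! (k - 1) = walk dep R ! Suc k then 2 else 1)"
    and "x {walk dep R ! k, walk dep R ! Suc k} =
      (if walk dep R ! (k - 1) = walk dep R ! Suc k then 2 else 1)"
proof -
  interpret route_walk dep R using route_walk_if_in_routes[OF R] .
  have "k - 1 \<le> Suc l" "Suc k \<le> Suc l" using k by simp_all
  then have "w ! (k - 1) \<in> V" "w ! Suc k \<in> V"
    using walk_in_route_or_depot R unfolding in_routes_def by blast+
  moreover have "w ! (k - 1) \<noteq> w ! k" "w ! Suc k \<noteq> w ! k"
    using walk_adjacent_neq[of "k - 1"] walk_adjacent_neq[of k] k by auto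
  ultimately show "x {w ! (k - 1), w ! k} = (if w ! (k - 1) = w ! Suc k then 2 else 1)"
    "x {w ! k, w ! Suc k} = (if w ! (k - 1) = w ! Suc k then 2 else 1)"
    using x_at_route_customer[OF R k, of "w ! (k - 1)"] x_at_route_customer[OF R k, of "w ! Suc k"]
    by (auto simp: x_commute)
qed

definition customer_path :: "'v list \<Rightarrow> bool" where
  "customer_path L \<longleftrightarrow> L \<noteq> [] \<and> distinct L \<and> set L \<subseteq> Vp \<and>
     (\<forall>i. Suc i < length L \<longrightarrow> 1 \<le> x {L ! i, L ! Suc i})"

lemma customer_path_rev: "customer_path L \<Longrightarrow> customer_path (rev L)"
proof -
  assume L: "customer_path L"
  have "1 \<le> x {rev L ! i, rev L ! Suc i}" if i: "Suc i < length L" for i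
  proof -
    let ?j = "length L - Suc (Suc i)"
    have "rev L ! i = L ! Suc ?j" "rev L ! Suc i = L ! ?j" using i
      by (auto simp: rev_nth Suc_diff_Suc)
    moreover have "1 \<le> x {L ! ?j, L ! Suc ?j}" using L i unfolding customer_path_def by auto
    ultimately show ?thesis by (simp add: insert_commute)
  qed
  then show ?thesis using L unfolding customer_path_def by auto
qed

lemma customer_path_no_chord:
  assumes L: "customer_path L" and j: "2 \<le> j" "j < length L"
  shows "x {L ! 0, L ! j} = 0"
proof (rule ccontr)
  assume "x {L ! 0, L ! j} \<noteq> 0"
  moreover have "L ! 0 \<in> Vp" "L ! j \<in> Vp" "L ! 0 \<noteq> L ! j"
    using L j unfolding customer_path_def by (auto simp: nth_eq_iff_index_eq)
  ultimately have closing: "1 \<le> x {L ! j, L ! 0}"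
    using x_nonneg x_pos_imp_ge_1 by (simp add: insert_commute less_le)
  let ?M = "take (Suc j) L"
  show False
  proof (rule no_customer_cycle)
    show "distinct ?M" "set ?M \<subseteq> Vp" using L unfolding customer_path_def
      by (auto dest: in_set_takeD)
    show "3 \<le> length ?M" using j by simp
    show "1 \<le> x {?M ! i, ?M ! (Suc i mod length ?M)}" if "i < length ?M" for i
    proof (cases "i = j")
      case True
      then show ?thesis using closing j by simp
    next
      case False
      then show ?thesis using that j L unfolding customer_path_def by simp
    qed
  qed
qed

lemma x_depot_split:
  assumes "c \<in> Vp"
  shows "(\<Sum>u\<in>V - {c}. x {c, u}) = x {c, dep} + (\<Sum>u\<in>Vp - {c}. x {c, u})"
proof -
  have "V - {c} = insert dep (Vp - {c})" using assms depot_not_customer by auto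
  then show ?thesis using finite_customers depot_not_customer by simp
qed

lemma customer_path_start_at_depot:
  assumes L: "customer_path L" and closed: "\<And>u. u \<in> Vp - set L \<Longrightarrow> x {hd L, u} = 0"
  shows "length L = 1 \<Longrightarrow> x {dep, hd L} = 2" "1 \<le> x {dep, hd L}"
proof -
  let ?c = "L ! 0"
  have hd: "hd L = ?c" using L unfolding customer_path_def by (simp add: hd_conv_nth)
  have c: "?c \<in> Vp" using L unfolding customer_path_def by (cases L) auto
  have zero: "x {?c, u} = 0" if u: "u \<in> Vp - {?c}" and "length L = 1 \<or> u \<noteq> L ! 1" for u
  proof (cases "u \<in> set L")
    case True
    then obtain j where j: "j < length L" "L ! j = u" by (auto simp: in_set_conv_nth)
    have "2 \<le> j"
    proof (rule ccontr)
      assume "\<not> 2 \<le> j"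
      then have "j = 0 \<or> j = 1" by auto
      then show False using j u that(2) by auto
    qed
    then show ?thesis using customer_path_no_chord[OF L, of j] j by simp
  qed (use closed u hd in simp)
  have "(\<Sum>u\<in>Vp - {?c}. x {?c, u}) \<le> (if length L = 1 then 0 else 1)"
  proof (cases "length L = 1")
    case True
    then show ?thesis using zero by simp
  next
    case False
    then have len: "1 < length L" using L unfolding customer_path_def by (cases L) auto
    then have "L ! 1 \<in> set L" "L ! 1 \<noteq> ?c"
      using L unfolding customer_path_def by (auto simp: nth_eq_iff_index_eq)
    then have b: "L ! 1 \<in> Vp - {?c}" using L unfolding customer_path_def by auto
    have "(\<Sum>u\<in>Vp - {?c}. x {?c, u}) = (\<Sum>u\<in>{L ! 1}. x {?c, u})"
      using zero b finite_customers False by (intro sum.mono_neutral_right) auto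
    moreover have "x {?c, L ! 1} \<le> 1" using b c by (intro x_customers_le_1) auto
    ultimately show ?thesis using False by simp
  qed
  moreover have "x {?c, dep} \<le> 2" using x_cases c depot_not_customer by fastforce
  ultimately have "length L = 1 \<longrightarrow> x {?c, dep} = 2" "1 \<le> x {?c, dep}"
    using degree_eq_2[OF c] x_depot_split[OF c] by (auto split: if_splits)
  then show "length L = 1 \<Longrightarrow> x {dep, hd L} = 2" "1 \<le> x {dep, hd L}"
    using hd by (simp_all add: insert_commute)
qed

lemma in_routes_if_walk_edges:
  assumes R: "route_walk dep R" "set R \<subseteq> Vp"
    and walk_edges: "\<And>i. i \<le> length R \<Longrightarrow> 1 \<le> x {walk dep R ! i, walk dep R ! Suc i}"
    and singleton: "length R = 1 \<Longrightarrow> x {dep, R ! 0} = 2"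
  shows "in_routes dep Vp x R"
proof -
  interpret route_walk dep R by fact
  have "x e = real (count_list (route_edges dep R) e)"
    if e: "e \<in> edges dep Vp" "e \<inter> set R \<noteq> {}" for e
  proof -
    obtain c where c: "c \<in> e" "c \<in> set R" using e(2) by blast
    obtain p q where pq: "e = {p, q}" "p \<in> V" "q \<in> V" "p \<noteq> q"
      using e(1) unfolding edges_def verts_def by blast
    define u where "u = (if c = p then q else p)"
    have u: "e = {c, u}" "u \<in> V - {c}" using pq c(1) unfolding u_def by auto
    obtain k where k: "1 \<le> k" "k \<le> l" "w ! k = c" using customer_position[OF c(2)] .
    let ?a = "w ! (k - 1)" and ?b = "w ! Suc k"
    have cV: "c \<in> Vp" using c(2) R(2) by blast
    have "k - 1 \<le> Suc l" "Suc k \<le> Suc l" using k by simp_all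
    then have "?a \<in> V" "?b \<in> V" using walk_in_route_or_depot R(2) by blast+
    moreover have "?a \<noteq> c" "?b \<noteq> c" using walk_adjacent_neq[of "k - 1"] walk_adjacent_neq[of k] k by auto
    ultimately have ab: "?a \<in> V - {c}" "?b \<in> V - {c}" by simp_all
    have xa: "1 \<le> x {c, ?a}" using walk_edges[of "k - 1"] k by (simp add: insert_commute)
    have xb: "1 \<le> x {c, ?b}" using walk_edges[of k] k by simp
    have x2: "x {c, ?a} = 2" if "?a = ?b"
    proof -
      have "l = 1" using walk_neighbours_eq_imp_singleton[OF k(1,2) that] .
      then have "k = 1" using k by simp
      then show ?thesis using singleton \<open>l = 1\<close> k walk_first walk_customer(1)[of 1]
        by (simp add: insert_commute)
    qed
    show ?thesis
      using degree_two_support[OF cV ab xa xb x2 u(2)] count_route_edges[of k u] k u by simp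
  qed
  then show ?thesis unfolding in_routes_def using route_nonempty distinct_route R(2) by blast
qed

lemma in_routes_if_closed_path:
  assumes L: "customer_path L"
    and hd_closed: "\<And>u. u \<in> Vp - set L \<Longrightarrow> x {hd L, u} = 0"
    and last_closed: "\<And>u. u \<in> Vp - set L \<Longrightarrow> x {last L, u} = 0"
  shows "in_routes dep Vp x L"
proof -
  have L': "L \<noteq> []" "distinct L" "set L \<subseteq> Vp"
    and path_edges: "\<And>i. Suc i < length L \<Longrightarrow> 1 \<le> x {L ! i, L ! Suc i}"
    using L unfolding customer_path_def by auto
  interpret route_walk dep L using L' depot_not_customer by unfold_locales auto
  have first: "1 \<le> x {dep, hd L}" using customer_path_start_at_depot(2)[OF L hd_closed] .
  have "1 \<le> x {dep, hd (rev L)}"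
    using customer_path_start_at_depot(2)[OF customer_path_rev[OF L]] last_closed
    by (simp add: hd_rev)
  then have last: "1 \<le> x {dep, last L}" by (simp add: hd_rev)
  have "1 \<le> x {w ! i, w ! Suc i}" if i: "i \<le> l" for i
  proof -
    consider "i = 0" | "i = l" | "0 < i" "i < l" using i by linarith
    then show ?thesis
    proof cases
      case 1
      then show ?thesis using first L'(1) by (simp add: walk_def hd_conv_nth nth_append)
    next
      case 2
      have "1 \<le> l" using L'(1) by (cases L) auto
      then show ?thesis using 2 last L'(1) walk_last walk_customer(1)[of l]
        by (simp add: last_conv_nth insert_commute)
    next
      case 3
      then show ?thesis using path_edges[of "i - 1"] walk_customer(1)[of i] walk_customer(1)[of "Suc i"]
        by simp
    qed
  qed
  moreover have "l = 1 \<Longrightarrow> x {dep, L ! 0} = 2"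
    using customer_path_start_at_depot(1)[OF L hd_closed] L'(1) by (simp add: hd_conv_nth)
  ultimately show ?thesis using in_routes_if_walk_edges L'(3) route_walk_axioms by blast
qed

lemma customer_path_Cons:
  assumes L: "customer_path L" and u: "u \<in> Vp - set L" and xu: "1 \<le> x {u, hd L}"
  shows "customer_path (u # L)"
proof -
  have "1 \<le> x {(u # L) ! i, (u # L) ! Suc i}" if "Suc i < length (u # L)" for i
  proof (cases i)
    case 0
    then show ?thesis using xu L unfolding customer_path_def by (simp add: hd_conv_nth)
  next
    case (Suc j)
    then show ?thesis using that L unfolding customer_path_def by simp
  qed
  then show ?thesis using L u unfolding customer_path_def by auto
qed

lemma longest_path_hd_closed:
  assumes L: "customer_path L" "v \<in> set L"
    and longest: "\<And>L'. customer_path L' \<Longrightarrow> v \<in> set L' \<Longrightarrow> length L' \<le> length L"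
    and u: "u \<in> Vp - set L"
  shows "x {hd L, u} = 0"
proof (rule ccontr)
  assume "x {hd L, u} \<noteq> 0"
  moreover have "hd L \<in> Vp" "hd L \<noteq> u"
    using L u unfolding customer_path_def by (auto dest: hd_in_set)
  ultimately have "1 \<le> x {u, hd L}"
    using u x_nonneg x_pos_imp_ge_1 by (simp add: insert_commute less_le)
  then have "customer_path (u # L)" using customer_path_Cons[OF L(1) u] by simp
  then show False using longest[of "u # L"] L(2) by simp
qed

lemma route_through:
  assumes v: "v \<in> Vp"
  obtains R where "in_routes dep Vp x R" "v \<in> set R"
proof -
  let ?lengths = "\<lambda>n. \<exists>L. customer_path L \<and> v \<in> set L \<and> length L = n"
  have "customer_path [v]" using v unfolding customer_path_def by simp
  then have start: "?lengths 1" by force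
  have bound: "\<forall>n. ?lengths n \<longrightarrow> n \<le> card Vp"
  proof (intro allI impI)
    fix n assume "?lengths n"
    then obtain L where "customer_path L" "length L = n" by blast
    then have "card (set L) = n" "set L \<subseteq> Vp" unfolding customer_path_def by (auto simp: distinct_card)
    then show "n \<le> card Vp" using card_mono[OF finite_customers] by metis
  qed
  obtain n where n: "?lengths n" "\<And>m. ?lengths m \<Longrightarrow> m \<le> n"
    using Nat.ex_has_greatest_nat[OF start bound] by blast
  then obtain L where L: "customer_path L" "v \<in> set L" "length L = n" by blast
  have longest: "length L' \<le> length L" if "customer_path L'" "v \<in> set L'" for L'
    using n(2) that L(3) by blast
  have "in_routes dep Vp x L"
  proof (rule in_routes_if_closed_path[OF L(1)])
    show "x {hd L, u} = 0" if "u \<in> Vp - set L" for u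
      using longest_path_hd_closed[OF L(1,2) longest that] .
    show "x {last L, u} = 0" if "u \<in> Vp - set L" for u
      using longest_path_hd_closed[OF customer_path_rev[OF L(1)], of v u] L(2) longest that
      by (simp add: hd_rev)
  qed
  then show ?thesis using that L(2) by blast
qed

lemma route_neighbour_on_route:
  assumes R: "in_routes dep Vp x R" and c: "c \<in> set R"
    and u: "u \<in> Vp" "u \<noteq> c" and xu: "x {c, u} \<noteq> 0"
  shows "u \<in> set R"
proof -
  interpret route_walk dep R using route_walk_if_in_routes[OF R] .
  obtain k where k: "1 \<le> k" "k \<le> l" "w ! k = c" using customer_position[OF c] .
  then have "u = w ! (k - 1) \<or> u = w ! Suc k"
    using x_at_route_customer[OF R k(1,2), of u] u xu by (auto split: if_splits)
  moreover have "k - 1 \<le> Suc l" "Suc k \<le> Suc l" using k by simp_all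
  ultimately have "u \<in> insert dep (set R)" using walk_in_route_or_depot by blast
  then show ?thesis using u depot_not_customer by auto
qed

lemma route_edge_ge_1:
  assumes R: "in_routes dep Vp x R" and j: "Suc j < length R"
  shows "1 \<le> x {R ! j, R ! Suc j}"
proof -
  interpret route_walk dep R using route_walk_if_in_routes[OF R] .
  have k: "1 \<le> Suc j" "Suc j \<le> l" and k': "1 \<le> Suc (Suc j)" "Suc (Suc j) \<le> l" using j by simp_all
  have "R ! Suc j \<noteq> R ! j" using distinct_route j by (simp add: nth_eq_iff_index_eq)
  moreover have "R ! Suc j \<in> V" using R j unfolding in_routes_def by (auto dest: nth_mem)
  ultimately show ?thesis
    using x_at_route_customer[OF R k, of "R ! Suc j"] walk_customer(1)[OF k] walk_customer(1)[OF k']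
    by simp
qed

lemma routes_sharing_customer_subset:
  assumes R: "in_routes dep Vp x R" and R': "in_routes dep Vp x R'"
    and c: "c \<in> set R" "c \<in> set R'"
  shows "set R \<subseteq> set R'"
proof -
  have R_props: "distinct R" "set R \<subseteq> Vp" using R unfolding in_routes_def by simp_all
  have step: "R ! j \<in> set R' \<longleftrightarrow> R ! Suc j \<in> set R'" if j: "Suc j < length R" for j
  proof -
    have "R ! j \<in> Vp" "R ! Suc j \<in> Vp" using R_props(2) j by auto
    moreover have "R ! Suc j \<noteq> R ! j" using R_props(1) j by (simp add: nth_eq_iff_index_eq)
    moreover have "x {R ! j, R ! Suc j} \<noteq> 0" "x {R ! Suc j, R ! j} \<noteq> 0"
      using route_edge_ge_1[OF R j] by (auto simp: insert_commute)
    ultimately show ?thesis using route_neighbour_on_route[OF R'] by metis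
  qed
  have all_or_none: "R ! i \<in> set R' \<longleftrightarrow> R ! 0 \<in> set R'" if "i < length R" for i
    using that by (induction i) (auto simp: step)
  obtain i where "i < length R" "R ! i = c" using c(1) by (auto simp: in_set_conv_nth)
  then have "R ! 0 \<in> set R'" using all_or_none c(2) by blast
  then show ?thesis using all_or_none by (auto simp: in_set_conv_nth)
qed

definition route_assignment :: "('v \<Rightarrow> 'v list) \<Rightarrow> bool" where
  "route_assignment route \<longleftrightarrow> (\<forall>c\<in>Vp. in_routes dep Vp x (route c) \<and> c \<in> set (route c) \<and>
     (\<forall>u\<in>set (route c). route u = route c))"

lemma route_assignmentD:
  assumes "route_assignment route" "c \<in> Vp"
  shows "in_routes dep Vp x (route c)" "c \<in> set (route c)"
    "u \<in> set (route c) \<Longrightarrow> route u = route c"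
  using assms unfolding route_assignment_def by blast+

lemma route_assignment_position:
  assumes "route_assignment route" "c \<in> Vp"
  obtains k where "1 \<le> k" "k \<le> length (route c)" "walk dep (route c) ! k = c"
  by (rule route_walk.customer_position[OF route_walk_if_in_routes[OF route_assignmentD(1)[OF assms]]
        route_assignmentD(2)[OF assms]])

lemma route_assignment_exists:
  obtains route where "route_assignment route"
proof -
  \<comment> \<open>All routes through c have the customer set S c, so choosing a route by its customer set
    makes the choice agree along the route.\<close>
  define S where "S c = set (SOME R. in_routes dep Vp x R \<and> c \<in> set R)" for c
  define route where "route c = (SOME R. in_routes dep Vp x R \<and> set R = S c)" for c
  have S: "\<exists>R. in_routes dep Vp x R \<and> c \<in> set R \<and> set R = S c" if "c \<in> Vp" for c
  proof -
    have "\<exists>R. in_routes dep Vp x R \<and> c \<in> set R" using route_through[OF that] by blast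
    from someI_ex[OF this] show ?thesis unfolding S_def by blast
  qed
  have route: "in_routes dep Vp x (route c) \<and> set (route c) = S c" if "c \<in> Vp" for c
  proof -
    have "\<exists>R. in_routes dep Vp x R \<and> set R = S c" using S[OF that] by blast
    from someI_ex[OF this] show ?thesis unfolding route_def .
  qed
  have mem: "c \<in> set (route c)" if "c \<in> Vp" for c
    using route[OF that] S[OF that] by auto
  have same: "route u = route c" if c: "c \<in> Vp" and u: "u \<in> set (route c)" for c u
  proof -
    have "u \<in> Vp" using u route[OF c] unfolding in_routes_def by auto
    then obtain R where R: "in_routes dep Vp x R" "u \<in> set R" "set R = S u" using S by blast
    have "set R = set (route c)"
      using routes_sharing_customer_subset[OF R(1) _ R(2) u] routes_sharing_customer_subset[OF _ R(1) u R(2)]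
        route[OF c] by blast
    then have "S u = S c" using R(3) route[OF c] by simp
    then show ?thesis unfolding route_def by simp
  qed
  show ?thesis using that route mem same unfolding route_assignment_def by blast
qed

end

section \<open>Arc flows and route flows\<close>

definition route_flow :: "'v \<Rightarrow> 'v set \<Rightarrow> real \<Rightarrow> ('v \<Rightarrow> real) \<Rightarrow> ('v \<Rightarrow> real) \<Rightarrow> 'v list
    \<Rightarrow> ('v \<times> 'v \<Rightarrow> real) \<Rightarrow> ('v \<Rightarrow> real) \<Rightarrow> bool" where
  "route_flow dep Vp C dd yy R f g \<longleftrightarrow>
     (\<forall>a\<in>arcs dep Vp. 0 \<le> f a) \<and> (\<forall>v\<in>Vp. 0 \<le> g v) \<and>
     (\<forall>i\<in>{1..length R}. f (walk dep R ! (i - 1), walk dep R ! i) + dd (walk dep R ! i) =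
        f (walk dep R ! i, walk dep R ! (i + 1)) + g (walk dep R ! i)) \<and>
     (\<forall>i\<in>{1..length R + 1}. f (walk dep R ! (i - 1), walk dep R ! i) \<le> C) \<and>
     (\<forall>i\<in>{1..length R}. g (walk dep R ! i) \<le> C * yy (walk dep R ! i))"

definition arc_flow :: "'v \<Rightarrow> 'v set \<Rightarrow> real \<Rightarrow> ('v set \<Rightarrow> real) \<Rightarrow> ('v \<Rightarrow> real) \<Rightarrow> ('v \<Rightarrow> real)
    \<Rightarrow> ('v \<times> 'v \<Rightarrow> real) \<Rightarrow> ('v \<Rightarrow> real) \<Rightarrow> bool" where
  "arc_flow dep Vp C x dd yy f g \<longleftrightarrow>
     (\<forall>a\<in>arcs dep Vp. 0 \<le> f a) \<and> (\<forall>v\<in>Vp. 0 \<le> g v) \<and>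
     (\<forall>v\<in>Vp. (\<Sum>a\<in>{a\<in>arcs dep Vp. snd a = v}. f a) + dd v =
        (\<Sum>a\<in>{a\<in>arcs dep Vp. fst a = v}. f a) + g v) \<and>
     (\<forall>(u, v)\<in>arcs dep Vp. f (u, v) \<le> C / 2 * x {u, v}) \<and>
     (\<forall>v\<in>Vp. g v \<le> C * yy v)"

lemma Yset_iff:
  "yy \<in> Yset dep Vp C d \<xi> R \<longleftrightarrow>
     (\<forall>v\<in>Vp. yy v \<in> \<int> \<and> 0 \<le> yy v) \<and> (\<exists>f g. route_flow dep Vp C (d \<xi>) yy R f g)"
  unfolding Yset_def route_flow_def walk_def Let_def by simp

lemma FLOW_iff:
  "y \<in> FLOW dep Vp C N d b x \<longleftrightarrow>
     y \<in> box Vp N b \<and> (\<forall>\<xi>\<in>{1..N}. \<exists>f g. arc_flow dep Vp C x (d \<xi>) (y \<xi>) f g)"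
proof
  assume "y \<in> FLOW dep Vp C N d b x"
  then obtain f g where "y \<in> box Vp N b"
    and "\<forall>\<xi>\<in>{1..N}. \<forall>a\<in>arcs dep Vp. 0 \<le> f \<xi> a" "\<forall>\<xi>\<in>{1..N}. \<forall>v\<in>Vp. 0 \<le> g \<xi> v"
      "\<forall>\<xi>\<in>{1..N}. \<forall>v\<in>Vp. (\<Sum>a\<in>{a\<in>arcs dep Vp. snd a = v}. f \<xi> a) + d \<xi> v =
        (\<Sum>a\<in>{a\<in>arcs dep Vp. fst a = v}. f \<xi> a) + g \<xi> v"
      "\<forall>\<xi>\<in>{1..N}. \<forall>(u, v)\<in>arcs dep Vp. f \<xi> (u, v) \<le> C / 2 * x {u, v}"
      "\<forall>\<xi>\<in>{1..N}. \<forall>v\<in>Vp. g \<xi> v \<le> C * y \<xi> v"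
    unfolding FLOW_def by blast
  then have "y \<in> box Vp N b" "\<forall>\<xi>\<in>{1..N}. arc_flow dep Vp C x (d \<xi>) (y \<xi>) (f \<xi>) (g \<xi>)"
    unfolding arc_flow_def by blast+
  then show "y \<in> box Vp N b \<and> (\<forall>\<xi>\<in>{1..N}. \<exists>f g. arc_flow dep Vp C x (d \<xi>) (y \<xi>) f g)"
    by blast
next
  assume y: "y \<in> box Vp N b \<and> (\<forall>\<xi>\<in>{1..N}. \<exists>f g. arc_flow dep Vp C x (d \<xi>) (y \<xi>) f g)"
  then obtain f g where "\<forall>\<xi>\<in>{1..N}. arc_flow dep Vp C x (d \<xi>) (y \<xi>) (f \<xi>) (g \<xi>)"
    by metis
  then show "y \<in> FLOW dep Vp C N d b x" using y unfolding FLOW_def arc_flow_def by blast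
qed

lemma sum_arcs_into:
  "c \<in> insert dep Vp \<Longrightarrow>
    (\<Sum>a\<in>{a\<in>arcs dep Vp. snd a = c}. h a) = (\<Sum>u\<in>insert dep Vp - {c}. h (u, c))"
proof -
  assume c: "c \<in> insert dep Vp"
  have "{a\<in>arcs dep Vp. snd a = c} = (\<lambda>u. (u, c)) ` (insert dep Vp - {c})"
    using c unfolding arcs_def verts_def by auto
  moreover have "inj_on (\<lambda>u. (u, c)) (insert dep Vp - {c})" by (rule inj_onI) simp
  ultimately show ?thesis by (simp add: sum.reindex)
qed

lemma sum_arcs_out_of:
  "c \<in> insert dep Vp \<Longrightarrow>
    (\<Sum>a\<in>{a\<in>arcs dep Vp. fst a = c}. h a) = (\<Sum>u\<in>insert dep Vp - {c}. h (c, u))"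
proof -
  assume c: "c \<in> insert dep Vp"
  have "{a\<in>arcs dep Vp. fst a = c} = (\<lambda>u. (c, u)) ` (insert dep Vp - {c})"
    using c unfolding arcs_def verts_def by auto
  moreover have "inj_on (\<lambda>u. (c, u)) (insert dep Vp - {c})" by (rule inj_onI) simp
  ultimately show ?thesis by (simp add: sum.reindex)
qed

lemma arc_flow_capacity:
  "arc_flow dep Vp C x dd yy f g \<Longrightarrow> (u, v) \<in> arcs dep Vp \<Longrightarrow> 0 \<le> f (u, v) \<and> f (u, v) \<le> C / 2 * x {u, v}"
  unfolding arc_flow_def by blast

lemma arc_flow_balance:
  assumes "arc_flow dep Vp C x dd yy f g" "c \<in> Vp"
  shows "(\<Sum>u\<in>insert dep Vp - {c}. f (u, c)) + dd c = (\<Sum>u\<in>insert dep Vp - {c}. f (c, u)) + g c"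
proof -
  have "(\<Sum>a\<in>{a\<in>arcs dep Vp. snd a = c}. f a) + dd c = (\<Sum>a\<in>{a\<in>arcs dep Vp. fst a = c}. f a) + g c"
    using assms unfolding arc_flow_def by blast
  then show ?thesis using assms(2) sum_arcs_into[of c dep Vp f] sum_arcs_out_of[of c dep Vp f] by simp
qed

context integral_subtour_point
begin

lemma walk_arc_in_arcs:
  assumes R: "in_routes dep Vp x R" and i: "i \<le> length R"
  shows "(walk dep R ! i, walk dep R ! Suc i) \<in> arcs dep Vp"
proof -
  interpret route_walk dep R using route_walk_if_in_routes[OF R] .
  have "w ! i \<in> V" "w ! Suc i \<in> V"
    using walk_in_route_or_depot[of i] walk_in_route_or_depot[of "Suc i"] i R
    unfolding in_routes_def by auto
  then show ?thesis using walk_adjacent_neq[OF i] by (simp add: arcs_iff)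
qed

lemma sum_at_route_customer:
  assumes R: "in_routes dep Vp x R" and k: "1 \<le> k" "k \<le> length R"
    and zero: "\<And>u. u \<in> V - {walk dep R ! k} \<Longrightarrow> x {walk dep R ! k, u} = 0 \<Longrightarrow> h u = 0"
  shows "(\<Sum>u\<in>V - {walk dep R ! k}. h u) =
    (if walk dep R ! (k - 1) = walk dep R ! Suc k then h (walk dep R ! (k - 1))
     else h (walk dep R ! (k - 1)) + h (walk dep R ! Suc k))"
proof -
  interpret route_walk dep R using route_walk_if_in_routes[OF R] .
  let ?a = "w ! (k - 1)" and ?b = "w ! Suc k"
  have "k - 1 \<le> Suc l" "Suc k \<le> Suc l" using k by simp_all
  then have "?a \<in> V" "?b \<in> V"
    using walk_in_route_or_depot R unfolding in_routes_def by blast+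
  moreover have "?a \<noteq> w ! k" "?b \<noteq> w ! k"
    using walk_adjacent_neq[of "k - 1"] walk_adjacent_neq[of k] k by auto
  ultimately have ab: "{?a, ?b} \<subseteq> V - {w ! k}" by auto
  have "(\<Sum>u\<in>V - {w ! k}. h u) = (\<Sum>u\<in>{?a, ?b}. h u)"
  proof (rule sum.mono_neutral_right)
    show "finite (V - {w ! k})" using finite_customers by simp
    show "\<forall>u\<in>V - {w ! k} - {?a, ?b}. h u = 0"
      using zero x_at_route_customer[OF R k] by auto
  qed (use ab in simp)
  then show ?thesis by simp
qed

(* x = 2 only on the edge of a one-customer route, whose walk uses both arcs of it. *)

definition shifted_net_flow :: "real \<Rightarrow> ('v \<times> 'v \<Rightarrow> real) \<Rightarrow> 'v \<times> 'v \<Rightarrow> real" where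
  "shifted_net_flow C f a =
     (if x {fst a, snd a} \<le> 1 then C / 2 + f a - f (snd a, fst a) else f a)"

lemma shifted_net_flow_bounds:
  assumes C: "0 \<le> C" and f: "arc_flow dep Vp C x dd yy f g" and a: "(u, v) \<in> arcs dep Vp"
  shows "0 \<le> shifted_net_flow C f (u, v) \<and> shifted_net_flow C f (u, v) \<le> C"
proof -
  have uv: "u \<in> V" "v \<in> V" "u \<noteq> v" using a by (simp_all add: arcs_iff)
  then have "(v, u) \<in> arcs dep Vp" by (simp add: arcs_iff)
  then have bounds: "0 \<le> f (u, v)" "0 \<le> f (v, u)" "f (u, v) \<le> C / 2 * x {u, v}" "f (v, u) \<le> C / 2 * x {u, v}"
    using arc_flow_capacity[OF f a] arc_flow_capacity[OF f, of v u] x_commute[of v u] by auto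
  consider "x {u, v} = 0" | "x {u, v} = 1" | "x {u, v} = 2" using x_cases[OF uv] by blast
  then show ?thesis
  proof cases
    case 1
    then show ?thesis using bounds C by (simp add: shifted_net_flow_def)
  next
    case 2
    then show ?thesis using bounds by (simp add: shifted_net_flow_def)
  next
    case 3
    then show ?thesis using bounds by (simp add: shifted_net_flow_def)
  qed
qed

lemma shifted_net_flow_conservation:
  assumes R: "in_routes dep Vp x R" and f: "arc_flow dep Vp C x dd yy f g"
    and k: "1 \<le> k" "k \<le> length R"
  shows "shifted_net_flow C f (walk dep R ! (k - 1), walk dep R ! k) + dd (walk dep R ! k) =
    shifted_net_flow C f (walk dep R ! k, walk dep R ! (k + 1)) + g (walk dep R ! k)"
proof -
  interpret route_walk dep R using route_walk_if_in_routes[OF R] .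
  let ?c = "w ! k" and ?a = "w ! (k - 1)" and ?b = "w ! Suc k"
  have c: "?c \<in> Vp" using walk_customer(2)[OF k] R unfolding in_routes_def by auto
  have vanish: "f (u, ?c) = 0 \<and> f (?c, u) = 0" if "u \<in> V - {?c}" "x {?c, u} = 0" for u
  proof -
    have "(u, ?c) \<in> arcs dep Vp" "(?c, u) \<in> arcs dep Vp" using that c by (auto simp: arcs_iff)
    then show ?thesis
      using that arc_flow_capacity[OF f, of u ?c] arc_flow_capacity[OF f, of ?c u] x_commute[of u ?c]
      by auto
  qed
  have balance: "(if ?a = ?b then f (?a, ?c) else f (?a, ?c) + f (?b, ?c)) + dd ?c =
      (if ?a = ?b then f (?c, ?a) else f (?c, ?a) + f (?c, ?b)) + g ?c"
    using arc_flow_balance[OF f c] vanish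
      sum_at_route_customer[OF R k, of "\<lambda>u. f (u, ?c)"]
      sum_at_route_customer[OF R k, of "\<lambda>u. f (?c, u)"] by simp
  note xa = x_route_neighbours(1)[OF R k] and xb = x_route_neighbours(2)[OF R k]
  show ?thesis
  proof (cases "?a = ?b")
    case True
    then show ?thesis using balance xa by (simp add: shifted_net_flow_def x_commute)
  next
    case False
    then show ?thesis using balance xa xb by (simp add: shifted_net_flow_def x_commute)
  qed
qed

lemma route_flow_from_arc_flow:
  assumes C: "0 \<le> C" and R: "in_routes dep Vp x R" and f: "arc_flow dep Vp C x dd yy f g"
  shows "route_flow dep Vp C dd yy R (shifted_net_flow C f) g"
proof -
  have "walk dep R ! i \<in> Vp" if "i \<in> {1..length R}" for i
    using route_walk.walk_customer(2)[OF route_walk_if_in_routes[OF R], of i] that R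
    unfolding in_routes_def by auto
  moreover have "shifted_net_flow C f (walk dep R ! (i - 1), walk dep R ! i) \<le> C"
    if "i \<in> {1..length R + 1}" for i
  proof -
    have "Suc (i - 1) = i" using that by simp
    then show ?thesis using shifted_net_flow_bounds[OF C f walk_arc_in_arcs[OF R, of "i - 1"]] that by simp
  qed
  moreover have "0 \<le> shifted_net_flow C f a" if "a \<in> arcs dep Vp" for a
    using shifted_net_flow_bounds[OF C f] that by (cases a) blast
  ultimately show ?thesis
    using f shifted_net_flow_conservation[OF R f]
    unfolding route_flow_def arc_flow_def by auto
qed

definition split_flow :: "real \<Rightarrow> 'v list \<Rightarrow> ('v \<times> 'v \<Rightarrow> real) \<Rightarrow> 'v \<times> 'v \<Rightarrow> real" where
  "split_flow C R f a =
     (if x {fst a, snd a} = 0 then 0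
      else if walk_arc dep R a \<and> x {fst a, snd a} = 2 then f a
      else if walk_arc dep R a then f a / 2
      else if walk_arc dep R (snd a, fst a) then (C - f (snd a, fst a)) / 2
      else 0)"

lemma split_flow_bounds:
  assumes C: "0 \<le> C" and f: "route_flow dep Vp C dd yy R f g" and a: "(u, v) \<in> arcs dep Vp"
  shows "0 \<le> split_flow C R f (u, v) \<and> split_flow C R f (u, v) \<le> C / 2 * x {u, v}"
proof -
  have uv: "u \<in> V" "v \<in> V" "u \<noteq> v" using a by (simp_all add: arcs_iff)
  then have vu: "(v, u) \<in> arcs dep Vp" by (simp add: arcs_iff)
  have on_walk: "f b \<le> C" if b: "walk_arc dep R b" for b
  proof -
    obtain i where i: "i \<in> {1..Suc (length R)}"
      and ends: "walk dep R ! (i - 1) = fst b" "walk dep R ! i = snd b"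
      using b unfolding walk_arc_def by blast
    have "f (walk dep R ! (i - 1), walk dep R ! i) \<le> C" using f i unfolding route_flow_def by simp
    then show ?thesis unfolding ends by simp
  qed
  have nonneg: "0 \<le> f (u, v)" "0 \<le> f (v, u)" using f a vu unfolding route_flow_def by auto
  have xuv: "x {u, v} = 0 \<or> x {u, v} = 1 \<or> x {u, v} = 2" using x_cases[OF uv] .
  consider "walk_arc dep R (u, v)" | "\<not> walk_arc dep R (u, v)" "walk_arc dep R (v, u)"
    | "\<not> walk_arc dep R (u, v)" "\<not> walk_arc dep R (v, u)" by blast
  then show ?thesis
  proof cases
    case 1
    then show ?thesis using xuv nonneg on_walk[of "(u, v)"]
      by (elim disjE) (simp_all add: split_flow_def)
  next
    case 2
    then show ?thesis using xuv nonneg on_walk[of "(v, u)"]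
      by (elim disjE) (simp_all add: split_flow_def)
  next
    case 3
    then show ?thesis using xuv C by (elim disjE) (simp_all add: split_flow_def)
  qed
qed

lemma split_flow_conservation:
  assumes R: "in_routes dep Vp x R" and f: "route_flow dep Vp C dd yy R f g"
    and k: "1 \<le> k" "k \<le> length R"
  shows "(\<Sum>u\<in>V - {walk dep R ! k}. split_flow C R f (u, walk dep R ! k)) + dd (walk dep R ! k) =
    (\<Sum>u\<in>V - {walk dep R ! k}. split_flow C R f (walk dep R ! k, u)) + g (walk dep R ! k)"
proof -
  interpret route_walk dep R using route_walk_if_in_routes[OF R] .
  let ?c = "w ! k" and ?a = "w ! (k - 1)" and ?b = "w ! Suc k" and ?F = "split_flow C R f"
  have sums: "(\<Sum>u\<in>V - {?c}. ?F (u, ?c)) =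
        (if ?a = ?b then ?F (?a, ?c) else ?F (?a, ?c) + ?F (?b, ?c))"
      "(\<Sum>u\<in>V - {?c}. ?F (?c, u)) =
        (if ?a = ?b then ?F (?c, ?a) else ?F (?c, ?a) + ?F (?c, ?b))"
    using sum_at_route_customer[OF R k, of "\<lambda>u. ?F (u, ?c)"]
      sum_at_route_customer[OF R k, of "\<lambda>u. ?F (?c, u)"]
    by (simp_all add: split_flow_def x_commute)
  note xa = x_route_neighbours(1)[OF R k] and xb = x_route_neighbours(2)[OF R k]
  note walk_arcs = walk_arcs_at_customer[OF k]
  have "f (?a, ?c) + dd ?c = f (?c, ?b) + g ?c"
    using f k unfolding route_flow_def by simp
  then show ?thesis
    using sums xa xb walk_arcs by (cases "?a = ?b") (simp_all add: split_flow_def x_commute field_simps)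
qed

definition glued_flow :: "real \<Rightarrow> ('v \<Rightarrow> 'v list) \<Rightarrow> ('v list \<Rightarrow> 'v \<times> 'v \<Rightarrow> real) \<Rightarrow> 'v \<times> 'v \<Rightarrow> real" where
  "glued_flow C route F a =
     (if fst a \<in> Vp then split_flow C (route (fst a)) (F (route (fst a))) a
      else if snd a \<in> Vp then split_flow C (route (snd a)) (F (route (snd a))) a
      else 0)"

lemma glued_flow_at_customer:
  assumes route: "route_assignment route" and c: "c \<in> Vp" and u: "u \<in> V - {c}"
  shows "glued_flow C route F (c, u) = split_flow C (route c) (F (route c)) (c, u)"
    and "glued_flow C route F (u, c) = split_flow C (route c) (F (route c)) (u, c)"
proof -
  show "glued_flow C route F (c, u) = split_flow C (route c) (F (route c)) (c, u)"
    using c by (simp add: glued_flow_def)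
  show "glued_flow C route F (u, c) = split_flow C (route c) (F (route c)) (u, c)"
  proof (cases "u \<in> Vp \<and> x {c, u} \<noteq> 0")
    case False
    then consider "u \<notin> Vp" | "x {u, c} = 0" by (auto simp: x_commute)
    then show ?thesis
    proof cases
      case 1
      then show ?thesis using c by (simp add: glued_flow_def)
    next
      case 2
      then show ?thesis by (simp add: glued_flow_def split_flow_def)
    qed
  next
    case True
    have "u \<in> set (route c)"
      using route_neighbour_on_route[OF route_assignmentD(1,2)[OF route c]] True u by simp
    then have "route u = route c" using route_assignmentD(3)[OF route c] by simp
    moreover have "glued_flow C route F (u, c) = split_flow C (route u) (F (route u)) (u, c)"
      using True by (simp add: glued_flow_def)
    ultimately show ?thesis by simp
  qed
qed

lemma glued_flow_bounds:
  assumes C: "0 \<le> C" and route: "route_assignment route"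
    and flows: "\<And>R. in_routes dep Vp x R \<Longrightarrow> route_flow dep Vp C dd yy R (F R) (G R)"
    and uv: "(u, v) \<in> arcs dep Vp"
  shows "0 \<le> glued_flow C route F (u, v) \<and> glued_flow C route F (u, v) \<le> C / 2 * x {u, v}"
proof -
  consider "u \<in> Vp" | "u \<notin> Vp" "v \<in> Vp" using uv by (auto simp: arcs_iff)
  then obtain c where c: "c \<in> Vp"
    and glued: "glued_flow C route F (u, v) = split_flow C (route c) (F (route c)) (u, v)"
  proof cases
    case 1
    then show ?thesis using that[of u] by (simp add: glued_flow_def)
  next
    case 2
    then show ?thesis using that[of v] by (simp add: glued_flow_def)
  qed
  show ?thesis
    unfolding glued using split_flow_bounds[OF C flows[OF route_assignmentD(1)[OF route c]] uv] .
qed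

lemma arc_flow_from_route_flows:
  assumes C: "0 \<le> C" and route: "route_assignment route"
    and flows: "\<And>R. in_routes dep Vp x R \<Longrightarrow> route_flow dep Vp C dd yy R (F R) (G R)"
  shows "arc_flow dep Vp C x dd yy (glued_flow C route F) (\<lambda>v. G (route v) v)"
proof -
  note R = route_assignmentD(1)[OF route]
  have balance: "(\<Sum>a\<in>{a\<in>arcs dep Vp. snd a = c}. glued_flow C route F a) + dd c =
      (\<Sum>a\<in>{a\<in>arcs dep Vp. fst a = c}. glued_flow C route F a) + G (route c) c"
    if c: "c \<in> Vp" for c
  proof -
    have cV: "c \<in> V" using c by simp
    obtain k where k: "1 \<le> k" "k \<le> length (route c)" "walk dep (route c) ! k = c"
      using route_assignment_position[OF route c] .
    show ?thesis
      unfolding sum_arcs_into[OF cV] sum_arcs_out_of[OF cV]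
      using split_flow_conservation[OF R[OF c] flows[OF R[OF c]] k(1,2)] k(3)
        glued_flow_at_customer[OF route c] by simp
  qed
  have "G (route v) v \<le> C * yy v" "0 \<le> G (route v) v" if v: "v \<in> Vp" for v
  proof -
    obtain k where k: "1 \<le> k" "k \<le> length (route v)" "walk dep (route v) ! k = v"
      using route_assignment_position[OF route v] .
    show "G (route v) v \<le> C * yy v"
      using flows[OF R[OF v]] k unfolding route_flow_def by force
    show "0 \<le> G (route v) v" using flows[OF R[OF v]] v unfolding route_flow_def by blast
  qed
  then show ?thesis
    using glued_flow_bounds[OF C route flows] balance unfolding arc_flow_def by auto
qed

lemma arc_flow_iff_route_flows:
  assumes C: "0 \<le> C"
  shows "(\<exists>f g. arc_flow dep Vp C x dd yy f g) \<longleftrightarrow>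
    (\<forall>R. in_routes dep Vp x R \<longrightarrow> (\<exists>f g. route_flow dep Vp C dd yy R f g))"
proof
  assume "\<exists>f g. arc_flow dep Vp C x dd yy f g"
  then show "\<forall>R. in_routes dep Vp x R \<longrightarrow> (\<exists>f g. route_flow dep Vp C dd yy R f g)"
    using route_flow_from_arc_flow[OF C] by blast
next
  assume "\<forall>R. in_routes dep Vp x R \<longrightarrow> (\<exists>f g. route_flow dep Vp C dd yy R f g)"
  then obtain F G where "\<And>R. in_routes dep Vp x R \<Longrightarrow> route_flow dep Vp C dd yy R (F R) (G R)"
    by metis
  moreover obtain route where "route_assignment route" by (rule route_assignment_exists)
  ultimately show "\<exists>f g. arc_flow dep Vp C x dd yy f g"
    using arc_flow_from_route_flows[OF C] by blast
qed

lemma PiX_iff: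
  "y \<in> PiX dep Vp C N d x \<longleftrightarrow>
    y \<in> intpts Vp N \<and> (\<forall>\<xi>\<in>{1..N}. \<forall>v\<in>Vp. 0 \<le> y \<xi> v) \<and>
    (\<forall>\<xi>\<in>{1..N}. \<forall>R. in_routes dep Vp x R \<longrightarrow> (\<exists>f g. route_flow dep Vp C (d \<xi>) (y \<xi>) R f g))"
proof
  assume y: "y \<in> PiX dep Vp C N d x"
  have "y \<xi> v \<in> \<int> \<and> 0 \<le> y \<xi> v" if \<xi>: "\<xi> \<in> {1..N}" and v: "v \<in> Vp" for \<xi> v
  proof -
    obtain R where "in_routes dep Vp x R" "v \<in> set R" using route_through[OF v] .
    then show ?thesis using y \<xi> v unfolding PiX_def Yset_iff by blast
  qed
  then show "y \<in> intpts Vp N \<and> (\<forall>\<xi>\<in>{1..N}. \<forall>v\<in>Vp. 0 \<le> y \<xi> v) \<and>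
    (\<forall>\<xi>\<in>{1..N}. \<forall>R. in_routes dep Vp x R \<longrightarrow> (\<exists>f g. route_flow dep Vp C (d \<xi>) (y \<xi>) R f g))"
    using y unfolding PiX_def Yset_iff intpts_def by blast
next
  assume "y \<in> intpts Vp N \<and> (\<forall>\<xi>\<in>{1..N}. \<forall>v\<in>Vp. 0 \<le> y \<xi> v) \<and>
    (\<forall>\<xi>\<in>{1..N}. \<forall>R. in_routes dep Vp x R \<longrightarrow> (\<exists>f g. route_flow dep Vp C (d \<xi>) (y \<xi>) R f g))"
  then show "y \<in> PiX dep Vp C N d x" unfolding PiX_def Yset_iff intpts_def by blast
qed

end

theorem lemma4:
  fixes dep :: 'v and Vp :: "'v set" and C :: real and N :: nat
    and d :: "nat \<Rightarrow> 'v \<Rightarrow> real" and p :: "nat \<Rightarrow> real" and b :: "'v \<Rightarrow> int"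
    and XX :: "('v set \<Rightarrow> real) set" and x :: "'v set \<Rightarrow> real"
  assumes "finite Vp" and "dep \<notin> Vp" and "C > 0"
    and "\<forall>\<xi>\<in>{1..N}. \<forall>v\<in>Vp. d \<xi> v \<in> \<rat> \<and> 0 \<le> d \<xi> v \<and> d \<xi> v \<le> C"
    and "\<forall>\<xi>\<in>{1..N}. 0 \<le> p \<xi>" and "(\<Sum>\<xi>\<in>{1..N}. p \<xi>) = 1"
    and "\<forall>v\<in>Vp. 0 \<le> b v"
    and "XX = Xsub dep Vp \<or> (\<exists>k::nat. 0 < k \<and> XX = Xcvrp dep Vp C N p d k)"
    and "x \<in> XX" and "\<forall>e\<in>edges dep Vp. x e \<in> \<int>"
  shows "FLOW dep Vp C N d b x \<inter> intpts Vp N = PiX dep Vp C N d x \<inter> box Vp N b"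
proof -
  have "x \<in> Xsub dep Vp" using assms(8,9) unfolding Xcvrp_def by auto
  then interpret integral_subtour_point dep Vp x
    using assms(1,2,10) by unfold_locales
  have C: "0 \<le> C" using assms(3) by simp
  show ?thesis
    unfolding set_eq_iff Int_iff FLOW_iff PiX_iff arc_flow_iff_route_flows[OF C]
    by (auto simp: box_def)
qed

end
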